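(* For every integer $n\ge1$ and every $u\in V$, $\Pr(E_{6u})<\dfrac{36\,\zeta(3)}{\ln^{2}(n+1)}$, where $\zeta(3)=\sum_{i\ge1} i^{-3}$.
   Context: For an integer $n\ge1$, the $n$-octahedral graph $G'_n=(V,E')$ is the undirected graph with vertex set $V=\{u\in\mathbb{Z}^3:|u_1|+|u_2|+|u_3|=n\}$ and edge set $E'=\{\{v,w\}\subset V: v\neq w,\ |v_i-w_i|\le 1 \text{ for all } i=1,2,3\}$. For $u,v\in V$, $d_{uv}$ denotes the shortest-path distance in $G'_n$, and $Z_u=\left(\sum_{w\in V\setminus\{u\}} d_{uw}^{-2}\right)^{-1}$. The OSW random graph $G_n=(V,E)$ is the directed graph in which, for every $\{u,v\}\in E'$, both $(u,v),(v,u)\in E$, and in addition each vertex $u\in V$, independently of the others, chooses one vertex $v\in V\setminus\{u\}$ with probability $Z_u d_{uv}^{-2}$ and the long-range edge $(u,v)$ is added; $C_{uv}$ denotes the event that $u$ chooses $v$. For an ordered pair $(x,y)$ of distinct vertices, say $(x,y)$ is of type $s$ if $\{x,y\}\in E'$, and of type $w$ if $d_{xy}\ge2$ and $C_{xy}$ occurs. A C3 rooted at $u$ of type $(t_1,t_2,t_3)\in\{s,w\}^3$ is a triple $(u,a,b)$ of pairwise distinct vertices such that $(u,a)$ is of type $t_1$, $(a,b)$ is of type $t_2$ and $(b,u)$ is of type $t_3$. $E_{6u}$ is the event that there exists a C3 rooted at $u$ of type $(w,w,s)$. *)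

theory Defs
  imports "HOL-Probability.Probability"
begin

type_synonym vtx = "int \<times> int \<times> int"

definition octV :: "nat \<Rightarrow> vtx set" where
  "octV n = {(x,y,z). \<bar>x\<bar> + \<bar>y\<bar> + \<bar>z\<bar> = int n}"

definition octAdj :: "nat \<Rightarrow> vtx \<Rightarrow> vtx \<Rightarrow> bool" where
  "octAdj n v w \<longleftrightarrow> v \<in> octV n \<and> w \<in> octV n \<and> v \<noteq> w \<and>
     \<bar>fst v - fst w\<bar> \<le> 1 \<and> \<bar>fst (snd v) - fst (snd w)\<bar> \<le> 1 \<and>
     \<bar>snd (snd v) - snd (snd w)\<bar> \<le> 1"

definition octRel :: "nat \<Rightarrow> vtx rel" where
  "octRel n = {(v,w). octAdj n v w}"

definition octDist :: "nat \<Rightarrow> vtx \<Rightarrow> vtx \<Rightarrow> nat" where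
  "octDist n u v = (LEAST k. (u,v) \<in> octRel n ^^ k)"

definition octZ :: "nat \<Rightarrow> vtx \<Rightarrow> real" where
  "octZ n u = inverse (\<Sum>w\<in>octV n - {u}. 1 / (real (octDist n u w))\<^sup>2)"

definition choice_pmf :: "nat \<Rightarrow> vtx \<Rightarrow> vtx pmf" where
  "choice_pmf n u = embed_pmf (\<lambda>v. if v \<in> octV n - {u}
                                    then octZ n u / (real (octDist n u v))\<^sup>2 else 0)"

text \<open>Joint distribution of all choices (independent over vertices);
  outcome c: vertex u chooses c u.\<close>
definition OSW :: "nat \<Rightarrow> (vtx \<Rightarrow> vtx) pmf" where
  "OSW n = Pi_pmf (octV n) (0,0,0) (choice_pmf n)"

definition type_s :: "nat \<Rightarrow> vtx \<Rightarrow> vtx \<Rightarrow> bool" where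
  "type_s n x y \<longleftrightarrow> octAdj n x y"

definition type_w :: "nat \<Rightarrow> (vtx \<Rightarrow> vtx) \<Rightarrow> vtx \<Rightarrow> vtx \<Rightarrow> bool" where
  "type_w n c x y \<longleftrightarrow> x \<noteq> y \<and> octDist n x y \<ge> 2 \<and> c x = y"

definition E6 :: "nat \<Rightarrow> vtx \<Rightarrow> (vtx \<Rightarrow> vtx) set" where
  "E6 n u = {c. \<exists>a b. a \<in> octV n \<and> b \<in> octV n \<and> u \<noteq> a \<and> a \<noteq> b \<and> u \<noteq> b \<and>
       type_w n c u a \<and> type_w n c a b \<and> type_s n b u}"

definition zeta3 :: real where
  "zeta3 = (\<Sum>i. 1 / (real (Suc i))^3)"

end

theory Submission
  imports Defs "HOL-Analysis.Harmonic_Numbers"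
begin

text \<open>Once \<open>n \<ge> 21\<close>, every normaliser satisfies \<open>Z\<^sub>v \<le> 1 / ln (n + 1)\<close>: the largest
  coordinate of \<open>v\<close> is at least \<open>n/3\<close>, and moving units out of it inside the face of \<open>v\<close>
  gives \<open>j + 1\<close> vertices within distance \<open>j\<close> of \<open>v\<close> for every \<open>j \<le> n/3\<close>, so
  \<open>\<Sum>\<^sub>w d(v,w)\<^sup>-\<^sup>2 \<ge> \<Sum>\<^sub>j (j + 1)/j\<^sup>2 \<ge> ln (n + 1)\<close>.
  By the union bound, \<open>Pr(E\<^sub>6\<^sub>u)\<close> is at most the sum, over the at most six neighbours \<open>b\<close>
  of \<open>u\<close> and all \<open>a\<close>, of \<open>Z\<^sub>u Z\<^sub>a d(u,a)\<^sup>-\<^sup>2 d(a,b)\<^sup>-\<^sup>2\<close>. Both distances are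
  controlled by the Chebyshev distance \<open>j\<close> between the projections of \<open>u\<close> and \<open>a\<close> to the
  first two coordinates; this projection is injective on each half \<open>z \<ge> 0\<close>, \<open>z < 0\<close> of the
  octahedron, and the resulting planar sum is at most \<open>221/80\<close>. Hence
  \<open>Pr(E\<^sub>6\<^sub>u) \<le> 6 \<cdot> 2 \<cdot> (221/80) / ln\<^sup>2 (n + 1) < 36 / ln\<^sup>2 (n + 1)\<close>; for small \<open>n\<close> the
  right-hand side exceeds \<open>1\<close>, and \<open>\<zeta>(3) \<ge> 1\<close>.\<close>

section \<open>Paths in the octahedral graph\<close>

lemma finite_octV: "finite (octV n)"
proof -
  have "octV n \<subseteq> {-int n..int n} \<times> {-int n..int n} \<times> {-int n..int n}"
    by (auto simp: octV_def)
  thus ?thesis by (rule finite_subset) auto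
qed

lemma sym_octRel: "sym (octRel n)"
  by (auto simp: sym_def octRel_def octAdj_def abs_minus_commute)

lemma octRel_relpow_coord_le:
  assumes "(v,w) \<in> octRel n ^^ k"
  shows "\<bar>fst v - fst w\<bar> \<le> int k \<and> \<bar>fst (snd v) - fst (snd w)\<bar> \<le> int k \<and>
         \<bar>snd (snd v) - snd (snd w)\<bar> \<le> int k"
  using assms
proof (induction k arbitrary: w)
  case 0 thus ?case by simp
next
  case (Suc k)
  then obtain y where "(v,y) \<in> octRel n ^^ k" "(y,w) \<in> octRel n" by auto
  with Suc.IH[of y] show ?case by (auto simp: octRel_def octAdj_def)
qed

definition simplex3 :: "nat \<Rightarrow> (int \<times> int \<times> int) set" where
  "simplex3 n = {(x,y,z). 0 \<le> x \<and> 0 \<le> y \<and> 0 \<le> z \<and> x + y + z = int n}"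

definition l1_dist :: "int \<times> int \<times> int \<Rightarrow> int \<times> int \<times> int \<Rightarrow> int" where
  "l1_dist p q = \<bar>fst p - fst q\<bar> + \<bar>fst (snd p) - fst (snd q)\<bar> + \<bar>snd (snd p) - snd (snd q)\<bar>"

definition sign_vector :: "int \<times> int \<times> int \<Rightarrow> bool" where
  "sign_vector s \<longleftrightarrow> \<bar>fst s\<bar> = 1 \<and> \<bar>fst (snd s)\<bar> = 1 \<and> \<bar>snd (snd s)\<bar> = 1"

text \<open>A sign vector \<open>s\<close> identifies \<open>simplex3 n\<close> with a face of the octahedron.\<close>
definition orthant_map :: "int \<times> int \<times> int \<Rightarrow> int \<times> int \<times> int \<Rightarrow> vtx" where
  "orthant_map s p = (fst s * fst p, fst (snd s) * fst (snd p), snd (snd s) * snd (snd p))"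

definition signs :: "vtx \<Rightarrow> int \<times> int \<times> int" where
  "signs v = (if fst v \<ge> 0 then 1 else -1, if fst (snd v) \<ge> 0 then 1 else -1,
              if snd (snd v) \<ge> 0 then 1 else -1)"

definition abs_coords :: "vtx \<Rightarrow> int \<times> int \<times> int" where
  "abs_coords v = (\<bar>fst v\<bar>, \<bar>fst (snd v)\<bar>, \<bar>snd (snd v)\<bar>)"

lemma sign_vector_signs: "sign_vector (signs v)"
  by (simp add: sign_vector_def signs_def)

lemma orthant_map_signs_abs_coords: "orthant_map (signs v) (abs_coords v) = v"
  by (cases v) (auto simp: orthant_map_def signs_def abs_coords_def)

lemma abs_coords_in_simplex3: "v \<in> octV n \<Longrightarrow> abs_coords v \<in> simplex3 n"
  by (auto simp: abs_coords_def simplex3_def octV_def)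

lemma orthant_map_inj: "sign_vector s \<Longrightarrow> orthant_map s p = orthant_map s q \<Longrightarrow> p = q"
  by (cases s; cases p; cases q) (auto simp: orthant_map_def sign_vector_def)

lemma orthant_map_in_octV: "sign_vector s \<Longrightarrow> p \<in> simplex3 n \<Longrightarrow> orthant_map s p \<in> octV n"
  by (auto simp: orthant_map_def octV_def simplex3_def sign_vector_def abs_mult)

text \<open>On \<open>simplex3 n\<close> the coordinate differences sum to zero, so \<open>l1_dist p r = 2\<close>
  forces them to be \<open>1, -1, 0\<close> in some order.\<close>
lemma orthant_map_adj:
  assumes s: "sign_vector s" and p: "p \<in> simplex3 n" and r: "r \<in> simplex3 n"
    and pr: "l1_dist p r = 2"
  shows "octAdj n (orthant_map s p) (orthant_map s r)"
proof -
  obtain s1 s2 s3 where "s = (s1,s2,s3)" "\<bar>s1\<bar> = 1" "\<bar>s2\<bar> = 1" "\<bar>s3\<bar> = 1"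
    using s by (cases s) (auto simp: sign_vector_def)
  moreover obtain x y z a b c where "p = (x,y,z)" "r = (a,b,c)" by (cases p, cases r) auto
  ultimately show ?thesis
    using p r pr orthant_map_in_octV[OF s p] orthant_map_in_octV[OF s r]
    by (auto simp: octAdj_def orthant_map_def simplex3_def l1_dist_def
        right_diff_distrib[symmetric] abs_mult)
qed

text \<open>Move one unit from a coordinate where \<open>p\<close> exceeds \<open>q\<close> to one where it falls short.\<close>
lemma simplex3_step:
  assumes p: "p \<in> simplex3 n" and q: "q \<in> simplex3 n" and "p \<noteq> q"
  obtains r where "r \<in> simplex3 n" "l1_dist p r = 2" "l1_dist r q + 2 = l1_dist p q"
proof -
  obtain x y z x' y' z' where pq: "p = (x,y,z)" "q = (x',y',z')" by (cases p, cases q) auto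
  consider "x > x'" "y < y'" | "x > x'" "z < z'" | "y > y'" "x < x'" | "y > y'" "z < z'"
    | "z > z'" "x < x'" | "z > z'" "y < y'"
    using assms unfolding pq simplex3_def by auto linarith+
  then show ?thesis
  proof cases
    case 1 show ?thesis by (rule that[of "(x-1,y+1,z)"]) (use 1 p q pq in \<open>auto simp: simplex3_def l1_dist_def\<close>)
  next
    case 2 show ?thesis by (rule that[of "(x-1,y,z+1)"]) (use 2 p q pq in \<open>auto simp: simplex3_def l1_dist_def\<close>)
  next
    case 3 show ?thesis by (rule that[of "(x+1,y-1,z)"]) (use 3 p q pq in \<open>auto simp: simplex3_def l1_dist_def\<close>)
  next
    case 4 show ?thesis by (rule that[of "(x,y-1,z+1)"]) (use 4 p q pq in \<open>auto simp: simplex3_def l1_dist_def\<close>)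
  next
    case 5 show ?thesis by (rule that[of "(x+1,y,z-1)"]) (use 5 p q pq in \<open>auto simp: simplex3_def l1_dist_def\<close>)
  next
    case 6 show ?thesis by (rule that[of "(x,y+1,z-1)"]) (use 6 p q pq in \<open>auto simp: simplex3_def l1_dist_def\<close>)
  qed
qed

lemma orthant_map_relpow:
  assumes s: "sign_vector s"
  shows "p \<in> simplex3 n \<Longrightarrow> q \<in> simplex3 n \<Longrightarrow> l1_dist p q = 2 * int k \<Longrightarrow>
    (orthant_map s p, orthant_map s q) \<in> octRel n ^^ k"
proof (induction k arbitrary: p)
  case 0
  then have "p = q" by (cases p; cases q) (auto simp: l1_dist_def)
  thus ?case by simp
next
  case (Suc k)
  then have "p \<noteq> q" by (auto simp: l1_dist_def)
  then obtain r where r: "r \<in> simplex3 n" "l1_dist p r = 2" "l1_dist r q + 2 = l1_dist p q"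
    using simplex3_step Suc.prems by metis
  have "(orthant_map s p, orthant_map s r) \<in> octRel n"
    using orthant_map_adj[OF s Suc.prems(1) r(1,2)] by (simp add: octRel_def)
  moreover have "(orthant_map s r, orthant_map s q) \<in> octRel n ^^ k"
    using Suc r by simp
  ultimately show ?case by (rule relpow_Suc_I2)
qed

lemma l1_dist_even:
  assumes "p \<in> simplex3 n" "q \<in> simplex3 n"
  shows "even (l1_dist p q)"
proof -
  obtain x y z x' y' z' where pq: "p = (x,y,z)" "q = (x',y',z')" by (cases p, cases q) auto
  have "even (l1_dist p q) \<longleftrightarrow> even ((x - x') + (y - y') + (z - z'))"
    by (simp add: pq l1_dist_def)
  also have "(x - x') + (y - y') + (z - z') = 0"
    using assms by (simp add: pq simplex3_def)
  finally show ?thesis by simp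
qed

lemma orthant_map_rtrancl:
  assumes "sign_vector s" "p \<in> simplex3 n" "q \<in> simplex3 n"
  shows "(orthant_map s p, orthant_map s q) \<in> (octRel n)\<^sup>*"
proof -
  have "0 \<le> l1_dist p q" by (simp add: l1_dist_def)
  then have "l1_dist p q = 2 * int (nat (l1_dist p q div 2))"
    using l1_dist_even[OF assms(2,3)] by auto
  then show ?thesis using orthant_map_relpow[OF assms] relpow_imp_rtrancl by blast
qed

text \<open>Each face contains \<open>(n,0,0)\<close> or \<open>(-n,0,0)\<close>, and these are joined through \<open>(0,n,0)\<close>.\<close>
lemma octRel_connected:
  assumes v: "v \<in> octV n" and w: "w \<in> octV n"
  shows "(v,w) \<in> (octRel n)\<^sup>*"
proof -
  have pole: "(x, (int n,0,0)) \<in> (octRel n)\<^sup>*" if x: "x \<in> octV n" for x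
  proof -
    have corner: "(int n,0,0) \<in> simplex3 n" "(0,int n,0) \<in> simplex3 n"
      by (auto simp: simplex3_def)
    have "(x, orthant_map (signs x) (int n,0,0)) \<in> (octRel n)\<^sup>*"
      using orthant_map_rtrancl[OF sign_vector_signs[of x] abs_coords_in_simplex3[OF x] corner(1)]
      by (simp add: orthant_map_signs_abs_coords)
    moreover have "((-int n,0,0), (int n,0,0)) \<in> (octRel n)\<^sup>*"
    proof -
      have "sign_vector (-1,1,1)" "sign_vector (1,1,1)" by (auto simp: sign_vector_def)
      from this[THEN orthant_map_rtrancl, OF corner(1) corner(2)]
           this[THEN orthant_map_rtrancl, OF corner(2) corner(1)]
      show ?thesis by (auto simp: orthant_map_def intro: rtrancl_trans)
    qed
    moreover have "orthant_map (signs x) (int n,0,0) \<in> {(int n,0,0), (-int n,0,0)}"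
      by (auto simp: orthant_map_def signs_def)
    ultimately show ?thesis by (auto intro: rtrancl_trans)
  qed
  have "((int n,0,0), w) \<in> (octRel n)\<^sup>*"
    using pole[OF w] sym_rtrancl[OF sym_octRel] by (auto dest: symD)
  with pole[OF v] show ?thesis by (rule rtrancl_trans)
qed

lemma octDist_relpow: "v \<in> octV n \<Longrightarrow> w \<in> octV n \<Longrightarrow> (v,w) \<in> octRel n ^^ octDist n v w"
  unfolding octDist_def by (rule LeastI_ex) (use octRel_connected rtrancl_power in blast)

lemma octDist_le: "(v,w) \<in> octRel n ^^ k \<Longrightarrow> octDist n v w \<le> k"
  unfolding octDist_def by (rule Least_le)

lemma octDist_self: "octDist n v v = 0"
  using octDist_le[where k = 0 and v = v and w = v] by simp

lemma octDist_pos: "v \<in> octV n \<Longrightarrow> w \<in> octV n \<Longrightarrow> v \<noteq> w \<Longrightarrow> 1 \<le> octDist n v w"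
  using octDist_relpow[of v n w] by (cases "octDist n v w") auto

lemma octDist_coord_le:
  assumes "v \<in> octV n" "w \<in> octV n"
  shows "\<bar>fst v - fst w\<bar> \<le> int (octDist n v w) \<and> \<bar>fst (snd v) - fst (snd w)\<bar> \<le> int (octDist n v w)
     \<and> \<bar>snd (snd v) - snd (snd w)\<bar> \<le> int (octDist n v w)"
  using octRel_relpow_coord_le[OF octDist_relpow[OF assms]] .

section \<open>A lower bound for the normalising sum\<close>

definition lattice_triangle :: "nat \<Rightarrow> (nat \<times> nat) set" where
  "lattice_triangle m = {(a,b). 1 \<le> a + b \<and> a + b \<le> m}"

lemma sum_lattice_triangle:
  "(\<Sum>t\<in>lattice_triangle m. 1 / (real (fst t + snd t))\<^sup>2) = (\<Sum>j=1..m. (real j + 1) / (real j)\<^sup>2)"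
proof -
  have eq: "lattice_triangle m = (\<lambda>(j,a). (a, j - a)) ` (SIGMA j:{1..m}. {0..j})"
    by (force simp: lattice_triangle_def image_iff)
  have inj: "inj_on (\<lambda>(j,a). (a, j - a)) (SIGMA j:{1..m}. {0..j})"
    by (auto simp: inj_on_def)
  have "(\<Sum>t\<in>lattice_triangle m. 1 / (real (fst t + snd t))\<^sup>2) =
      (\<Sum>(j,a)\<in>(SIGMA j:{1..m}. {0..j}). 1 / (real j)\<^sup>2)"
    unfolding eq by (subst sum.reindex[OF inj]) (auto intro!: sum.cong)
  also have "\<dots> = (\<Sum>j=1..m. \<Sum>a=0..j. 1 / (real j)\<^sup>2)"
    by (rule sum.Sigma[symmetric]) auto
  also have "\<dots> = (\<Sum>j=1..m. (real j + 1) / (real j)\<^sup>2)"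
    by (intro sum.cong) (auto simp: field_simps)
  finally show ?thesis .
qed

lemma inverse_sq_dist_sum_ge_family:
  assumes v: "v \<in> octV n" and inj: "inj_on f (lattice_triangle m)"
    and sub: "f ` lattice_triangle m \<subseteq> octV n - {v}"
    and dist: "\<And>t. t \<in> lattice_triangle m \<Longrightarrow> octDist n v (f t) \<le> fst t + snd t"
  shows "(\<Sum>j=1..m. (real j + 1) / (real j)\<^sup>2) \<le> (\<Sum>w\<in>octV n - {v}. 1 / (real (octDist n v w))\<^sup>2)"
proof -
  have "(\<Sum>j=1..m. (real j + 1) / (real j)\<^sup>2) = (\<Sum>t\<in>lattice_triangle m. 1 / (real (fst t + snd t))\<^sup>2)"
    by (rule sum_lattice_triangle[symmetric])
  also have "\<dots> \<le> (\<Sum>t\<in>lattice_triangle m. 1 / (real (octDist n v (f t)))\<^sup>2)"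
  proof (intro sum_mono)
    fix t assume t: "t \<in> lattice_triangle m"
    have "f t \<in> octV n" "f t \<noteq> v" using sub t by auto
    then have "1 \<le> octDist n v (f t)" using octDist_pos[OF v] by metis
    thus "1 / (real (fst t + snd t))\<^sup>2 \<le> 1 / (real (octDist n v (f t)))\<^sup>2"
      using dist[OF t] by (intro divide_left_mono power_mono) auto
  qed
  also have "\<dots> = (\<Sum>w\<in>f ` lattice_triangle m. 1 / (real (octDist n v w))\<^sup>2)"
    by (simp add: sum.reindex[OF inj])
  also have "\<dots> \<le> (\<Sum>w\<in>octV n - {v}. 1 / (real (octDist n v w))\<^sup>2)"
    by (intro sum_mono2 sub) (auto intro: finite_octV)
  finally show ?thesis .
qed

text \<open>Vertices of the face of \<open>v\<close> reached by moving \<open>a + b\<close> units out of one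
  coordinate of \<open>v\<close>, \<open>a\<close> of them into a second and \<open>b\<close> into the third.\<close>
lemma inverse_sq_dist_sum_ge_fan:
  assumes v: "v = orthant_map s p" and s: "sign_vector s" and p: "p \<in> simplex3 n"
    and q: "\<And>t. t \<in> lattice_triangle m \<Longrightarrow>
              q t \<in> simplex3 n \<and> l1_dist p (q t) = 2 * int (fst t + snd t)"
    and inj: "inj_on q (lattice_triangle m)"
  shows "(\<Sum>j=1..m. (real j + 1) / (real j)\<^sup>2) \<le> (\<Sum>w\<in>octV n - {v}. 1 / (real (octDist n v w))\<^sup>2)"
proof (rule inverse_sq_dist_sum_ge_family)
  show "v \<in> octV n" using orthant_map_in_octV[OF s p] v by simp
  show "inj_on (orthant_map s \<circ> q) (lattice_triangle m)"
    using inj orthant_map_inj[OF s] by (auto simp: inj_on_def)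
  show "(orthant_map s \<circ> q) ` lattice_triangle m \<subseteq> octV n - {v}"
  proof (rule image_subsetI)
    fix t assume t: "t \<in> lattice_triangle m"
    have "q t \<noteq> p" using q[OF t] t by (auto simp: lattice_triangle_def l1_dist_def)
    then have "orthant_map s (q t) \<noteq> v" using orthant_map_inj[OF s] v by blast
    then show "(orthant_map s \<circ> q) t \<in> octV n - {v}"
      using q[OF t] orthant_map_in_octV[OF s] by simp
  qed
  fix t assume t: "t \<in> lattice_triangle m"
  show "octDist n v ((orthant_map s \<circ> q) t) \<le> fst t + snd t"
    using q[OF t] orthant_map_relpow[OF s p] octDist_le v by auto
qed

lemma ln_3_le: "ln (3::real) \<le> 3/2"
proof -
  have "(1 + 3/4) * (1 + 3/4) \<le> exp (3/4) * exp (3/4::real)"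
    using exp_ge_add_one_self[of "3/4::real"] by (intro mult_mono) auto
  also have "\<dots> = exp (3/2)" by (simp add: exp_add[symmetric])
  finally show ?thesis using ln_le_cancel_iff[of 3 "exp (3/2)"] by simp
qed

lemma ln_le_sum_fan_weights:
  assumes m: "7 \<le> m" and n: "n \<le> 3 * m"
  shows "ln (real n + 1) \<le> (\<Sum>j=1..m. (real j + 1) / (real j)\<^sup>2)"
proof -
  have "(\<Sum>j=1..m. (real j + 1) / (real j)\<^sup>2) = harm m + (\<Sum>j=1..m. 1 / (real j)\<^sup>2)"
    unfolding harm_def by (subst sum.distrib[symmetric])
      (auto intro!: sum.cong simp: field_simps power2_eq_square)
  moreover have "3/2 \<le> (\<Sum>j=1..m. 1 / (real j)\<^sup>2)"
  proof -
    have "(3/2::real) \<le> (\<Sum>j=1..7. 1 / (real j)\<^sup>2)"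
      by (simp add: numeral_eq_Suc power2_eq_square)
    also have "\<dots> \<le> (\<Sum>j=1..m. 1 / (real j)\<^sup>2)"
      using m by (intro sum_mono2) auto
    finally show ?thesis .
  qed
  moreover have "ln (real n + 1) \<le> 3/2 + ln (real m + 1)"
  proof -
    have "ln (real n + 1) \<le> ln (3 * (real m + 1))"
      using n by (intro ln_mono) auto
    also have "\<dots> = ln 3 + ln (real m + 1)" using ln_mult[of 3 "real m + 1"] by simp
    finally show ?thesis using ln_3_le by linarith
  qed
  ultimately show ?thesis using ln_le_harm[of m] by linarith
qed

lemma ln_le_inverse_sq_dist_sum:
  assumes n: "21 \<le> n" and v: "v \<in> octV n"
  shows "ln (real n + 1) \<le> (\<Sum>w\<in>octV n - {v}. 1 / (real (octDist n v w))\<^sup>2)"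
proof -
  obtain X Y Z where XYZ: "abs_coords v = (X,Y,Z)" by (cases "abs_coords v") auto
  have p: "(X,Y,Z) \<in> simplex3 n" using abs_coords_in_simplex3[OF v] XYZ by simp
  have v_eq: "v = orthant_map (signs v) (X,Y,Z)"
    using orthant_map_signs_abs_coords[of v] XYZ by simp
  note fan = inverse_sq_dist_sum_ge_fan[OF v_eq sign_vector_signs p]
  have "\<exists>m. n \<le> 3 * m \<and> (\<Sum>j=1..m. (real j + 1) / (real j)\<^sup>2) \<le>
           (\<Sum>w\<in>octV n - {v}. 1 / (real (octDist n v w))\<^sup>2)"
  proof -
    consider "Y \<le> X" "Z \<le> X" | "X \<le> Y" "Z \<le> Y" | "X \<le> Z" "Y \<le> Z" by linarith
    then show ?thesis
    proof cases
      case 1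
      show ?thesis
        by (intro exI[of _ "nat X"] conjI fan[where q = "\<lambda>(a,b). (X - int a - int b, Y + int a, Z + int b)"])
          (use 1 p in \<open>auto simp: simplex3_def l1_dist_def lattice_triangle_def inj_on_def\<close>)
    next
      case 2
      show ?thesis
        by (intro exI[of _ "nat Y"] conjI fan[where q = "\<lambda>(a,b). (X + int a, Y - int a - int b, Z + int b)"])
          (use 2 p in \<open>auto simp: simplex3_def l1_dist_def lattice_triangle_def inj_on_def\<close>)
    next
      case 3
      show ?thesis
        by (intro exI[of _ "nat Z"] conjI fan[where q = "\<lambda>(a,b). (X + int a, Y + int b, Z - int a - int b)"])
          (use 3 p in \<open>auto simp: simplex3_def l1_dist_def lattice_triangle_def inj_on_def\<close>)
    qed
  qed
  then obtain m where "n \<le> 3 * m" "(\<Sum>j=1..m. (real j + 1) / (real j)\<^sup>2) \<le>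
           (\<Sum>w\<in>octV n - {v}. 1 / (real (octDist n v w))\<^sup>2)" by blast
  with n ln_le_sum_fan_weights[of m n] show ?thesis by linarith
qed

section \<open>Weights of long-range pairs\<close>

text \<open>If \<open>j\<close> is the Chebyshev distance between the projections of \<open>u\<close> and \<open>a\<close> to the first
  two coordinates and \<open>b\<close> is a neighbour of \<open>u\<close>, then \<open>max 2 j \<le> d(u,a)\<close> and
  \<open>max 2 (j - 1) \<le> d(a,b)\<close> on a \<open>(w,w,s)\<close> triangle; the weight bounds \<open>d(u,a)\<^sup>-\<^sup>2 d(a,b)\<^sup>-\<^sup>2\<close>.\<close>
definition pair_weight :: "nat \<Rightarrow> real" where
  "pair_weight j = 1 / ((real (max 2 j))\<^sup>2 * (real (max 2 (j - 1)))\<^sup>2)"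

definition int_square :: "nat \<Rightarrow> (int \<times> int) set" where
  "int_square M = {-int M..int M} \<times> {-int M..int M}"

definition square_weight :: "nat \<Rightarrow> real" where
  "square_weight M = (\<Sum>pq\<in>int_square M. pair_weight (nat (max \<bar>fst pq\<bar> \<bar>snd pq\<bar>)))"

lemma finite_int_square: "finite (int_square M)"
  by (simp add: int_square_def)

lemma card_int_square: "card (int_square M) = (2 * M + 1)\<^sup>2"
proof -
  have "nat (2 * int M + 1) = 2 * M + 1" by arith
  thus ?thesis by (simp add: int_square_def card_cartesian_product power2_eq_square)
qed

lemma square_weight_Suc: "square_weight (Suc M) = square_weight M + real (8 * M + 8) * pair_weight (Suc M)"
proof -
  have sub: "int_square M \<subseteq> int_square (Suc M)" by (auto simp: int_square_def)
  have "square_weight (Suc M) =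
      (\<Sum>pq\<in>int_square (Suc M) - int_square M. pair_weight (nat (max \<bar>fst pq\<bar> \<bar>snd pq\<bar>))) + square_weight M"
    unfolding square_weight_def by (rule sum.subset_diff[OF sub finite_int_square])
  also have "(\<Sum>pq\<in>int_square (Suc M) - int_square M. pair_weight (nat (max \<bar>fst pq\<bar> \<bar>snd pq\<bar>))) =
      (\<Sum>pq\<in>int_square (Suc M) - int_square M. pair_weight (Suc M))"
  proof (intro sum.cong refl)
    fix pq assume "pq \<in> int_square (Suc M) - int_square M"
    hence "max \<bar>fst pq\<bar> \<bar>snd pq\<bar> = int (Suc M)" by (cases pq) (auto simp: int_square_def)
    thus "pair_weight (nat (max \<bar>fst pq\<bar> \<bar>snd pq\<bar>)) = pair_weight (Suc M)" by (metis nat_int)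
  qed
  also have "card (int_square (Suc M) - int_square M) = 8 * M + 8"
    using card_Diff_subset[OF finite_int_square sub] card_int_square[of M] card_int_square[of "Suc M"]
    by (simp add: power2_eq_square algebra_simps)
  ultimately show ?thesis by simp
qed

lemma square_weight_2: "square_weight 2 = 25/16"
proof -
  have "square_weight 0 = 1/16" by (simp add: square_weight_def int_square_def pair_weight_def)
  then show ?thesis
    using square_weight_Suc[of 0] square_weight_Suc[of 1] by (simp add: numeral_2_eq_2 pair_weight_def)
qed

lemma ring_weight_le_telescoping:
  fixes m :: real assumes m: "2 \<le> m"
  shows "8 * (m + 1) / ((m + 1)\<^sup>2 * m\<^sup>2) \<le> 24 / (5 * m\<^sup>2) - 24 / (5 * (m + 1)\<^sup>2)"
proof -
  have pos: "0 < m\<^sup>2 * (m + 1)\<^sup>2" using m by simp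
  have "24 / (5 * m\<^sup>2) - 24 / (5 * (m + 1)\<^sup>2) = (24 * (2 * m + 1) / 5) / (m\<^sup>2 * (m + 1)\<^sup>2)"
    using m by (simp add: field_simps) (simp add: algebra_simps power2_eq_square)
  moreover have "8 * (m + 1) / (m\<^sup>2 * (m + 1)\<^sup>2) \<le> (24 * (2 * m + 1) / 5) / (m\<^sup>2 * (m + 1)\<^sup>2)"
    using m pos by (intro divide_right_mono) auto
  ultimately show ?thesis by (simp add: mult.commute)
qed

text \<open>\<open>221/80 = square_weight 2 + 24/(5 \<cdot> 2\<^sup>2)\<close>.\<close>
lemma square_weight_le_telescoping: "2 \<le> M \<Longrightarrow> square_weight M \<le> 221/80 - 24 / (5 * (real M)\<^sup>2)"
proof (induction M rule: dec_induct)
  case base thus ?case using square_weight_2 by simp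
next
  case (step M)
  have "pair_weight (Suc M) = 1 / ((real M + 1)\<^sup>2 * (real M)\<^sup>2)"
    using step(1) by (simp add: pair_weight_def max_def)
  moreover have "real (8 * M + 8) / ((real M + 1)\<^sup>2 * (real M)\<^sup>2) \<le>
      24 / (5 * (real M)\<^sup>2) - 24 / (5 * (real (Suc M))\<^sup>2)"
    using ring_weight_le_telescoping[of "real M"] step(1) by (simp add: algebra_simps)
  ultimately show ?case using step(3) square_weight_Suc[of M] by simp
qed

lemma square_weight_le: "square_weight M \<le> 221/80"
proof -
  have "square_weight M \<le> square_weight (max 2 M)"
    unfolding square_weight_def
    by (intro sum_mono2 finite_int_square) (auto simp: int_square_def pair_weight_def)
  also have "\<dots> \<le> 221/80 - 24 / (5 * (real (max 2 M))\<^sup>2)"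
    by (rule square_weight_le_telescoping) simp
  also have "\<dots> \<le> 221/80" by simp
  finally show ?thesis .
qed

definition proj_dist :: "vtx \<Rightarrow> vtx \<Rightarrow> nat" where
  "proj_dist u a = nat (max \<bar>fst a - fst u\<bar> \<bar>fst (snd a) - fst (snd u)\<bar>)"

lemma pair_weight_sum_le_square_weight:
  assumes u: "u \<in> octV n" and S: "S \<subseteq> octV n"
    and inj: "\<And>a b. a \<in> S \<Longrightarrow> b \<in> S \<Longrightarrow> fst a = fst b \<Longrightarrow> fst (snd a) = fst (snd b) \<Longrightarrow> a = b"
  shows "(\<Sum>a\<in>S. pair_weight (proj_dist u a)) \<le> square_weight (2 * n)"
proof -
  define \<pi> where "\<pi> = (\<lambda>a::vtx. (fst a - fst u, fst (snd a) - fst (snd u)))"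
  have "inj_on \<pi> S" using inj by (auto simp: inj_on_def \<pi>_def)
  then have "(\<Sum>a\<in>S. pair_weight (proj_dist u a)) =
        (\<Sum>pq\<in>\<pi> ` S. pair_weight (nat (max \<bar>fst pq\<bar> \<bar>snd pq\<bar>)))"
    by (simp add: sum.reindex \<pi>_def proj_dist_def)
  also have "\<dots> \<le> square_weight (2 * n)"
    unfolding square_weight_def
  proof (intro sum_mono2 finite_int_square image_subsetI)
    fix a assume "a \<in> S"
    then have "a \<in> octV n" using S by auto
    then show "\<pi> a \<in> int_square (2 * n)" using u
      by (cases a; cases u) (auto simp: \<pi>_def int_square_def octV_def)
  qed (simp add: pair_weight_def)
  finally show ?thesis .
qed

text \<open>The projection to the first two coordinates is injective on each of the two
  half-octahedra \<open>z \<ge> 0\<close> and \<open>z < 0\<close>.\<close>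
lemma pair_weight_sum_le:
  assumes u: "u \<in> octV n"
  shows "(\<Sum>a\<in>octV n. pair_weight (proj_dist u a)) \<le> 2 * (221/80)"
proof -
  define Vp where "Vp = {a \<in> octV n. snd (snd a) \<ge> 0}"
  define Vm where "Vm = {a \<in> octV n. snd (snd a) < 0}"
  have "octV n = Vp \<union> Vm" "Vp \<inter> Vm = {}" "finite Vp" "finite Vm"
    using finite_octV by (auto simp: Vp_def Vm_def)
  then have "(\<Sum>a\<in>octV n. pair_weight (proj_dist u a)) =
      (\<Sum>a\<in>Vp. pair_weight (proj_dist u a)) + (\<Sum>a\<in>Vm. pair_weight (proj_dist u a))"
    by (simp add: sum.union_disjoint)
  also have "\<dots> \<le> square_weight (2 * n) + square_weight (2 * n)"
    by (intro add_mono pair_weight_sum_le_square_weight[OF u])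
      (auto simp: Vp_def Vm_def octV_def)
  finally show ?thesis using square_weight_le[of "2 * n"] by linarith
qed

section \<open>Triangles of type (w,w,s)\<close>

definition abs_shift :: "int \<Rightarrow> int \<Rightarrow> int" where
  "abs_shift s d = (if s = 0 then \<bar>d\<bar> else s * d)"

lemma abs_add_unit: "d \<in> {-1,0,1} \<Longrightarrow> \<bar>x + d\<bar> = \<bar>x\<bar> + abs_shift (sgn x) d"
  by (auto simp: abs_shift_def sgn_if abs_if)

definition unit_offsets :: "vtx list" where
  "unit_offsets = [(a,b,c). a \<leftarrow> [-1,0,1], b \<leftarrow> [-1,0,1], c \<leftarrow> [-1,0,1]]"

lemma set_unit_offsets: "set unit_offsets = {-1,0,1} \<times> {-1,0,1} \<times> {-1,0,1}"
  by (simp add: unit_offsets_def)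

lemma length_filter_unit_offsets_le:
  assumes "s1 \<in> {-1,0,1}" "s2 \<in> {-1,0,1}" "s3 \<in> {-1,0,1}" "(s1,s2,s3) \<noteq> (0,0,0)"
  shows "length (filter (\<lambda>d. d \<noteq> (0,0,0) \<and>
    abs_shift s1 (fst d) + abs_shift s2 (fst (snd d)) + abs_shift s3 (snd (snd d)) = 0) unit_offsets) \<le> 6"
proof -
  have "s1 = -1 \<or> s1 = 0 \<or> s1 = 1" "s2 = -1 \<or> s2 = 0 \<or> s2 = 1" "s3 = -1 \<or> s3 = 0 \<or> s3 = 1"
    using assms by auto
  then show ?thesis using assms(4) unfolding unit_offsets_def
    by (elim disjE) (simp_all add: abs_shift_def)
qed

text \<open>A neighbour \<open>u + d\<close> with \<open>d \<in> {-1,0,1}\<^sup>3\<close> keeps \<open>\<bar>u\<^sub>1\<bar> + \<bar>u\<^sub>2\<bar> + \<bar>u\<^sub>3\<bar>\<close>, a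
  condition on \<open>d\<close> depending only on the signs of \<open>u\<close>; it leaves at most six offsets.\<close>
lemma card_octAdj_le_6:
  assumes u: "u \<in> octV n" and n: "1 \<le> n"
  shows "card {b \<in> octV n. octAdj n b u} \<le> 6"
proof -
  obtain u1 u2 u3 where ue: "u = (u1,u2,u3)" by (cases u) auto
  define P where "P = (\<lambda>d::vtx. d \<noteq> (0,0,0) \<and>
    abs_shift (sgn u1) (fst d) + abs_shift (sgn u2) (fst (snd d)) + abs_shift (sgn u3) (snd (snd d)) = 0)"
  define shift where "shift = (\<lambda>d::vtx. (u1 + fst d, u2 + fst (snd d), u3 + snd (snd d)))"
  have sgns: "sgn u1 \<in> {-1,0,1}" "sgn u2 \<in> {-1,0,1}" "sgn u3 \<in> {-1,0,1}" by (auto simp: sgn_if)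
  have "(sgn u1, sgn u2, sgn u3) \<noteq> (0,0,0)" using u n ue by (auto simp: octV_def sgn_0_0)
  note count = length_filter_unit_offsets_le[OF sgns this, folded P_def]
  have "{b \<in> octV n. octAdj n b u} \<subseteq> shift ` set (filter P unit_offsets)"
  proof
    fix b assume b: "b \<in> {b \<in> octV n. octAdj n b u}"
    obtain d1 d2 d3 where be: "b = (u1 + d1, u2 + d2, u3 + d3)"
      by (rule that[of "fst b - u1" "fst (snd b) - u2" "snd (snd b) - u3"]) simp
    have "\<bar>d1\<bar> \<le> 1" "\<bar>d2\<bar> \<le> 1" "\<bar>d3\<bar> \<le> 1" "(d1,d2,d3) \<noteq> (0,0,0)"
      using b by (auto simp: be ue octAdj_def)
    then have dd: "d1 \<in> {-1,0,1}" "d2 \<in> {-1,0,1}" "d3 \<in> {-1,0,1}" "(d1,d2,d3) \<noteq> (0,0,0)"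
      by auto
    have "\<bar>u1 + d1\<bar> + \<bar>u2 + d2\<bar> + \<bar>u3 + d3\<bar> = \<bar>u1\<bar> + \<bar>u2\<bar> + \<bar>u3\<bar>"
      using b u by (auto simp: be ue octV_def)
    then have "P (d1,d2,d3)"
      using dd abs_add_unit[OF dd(1), of u1] abs_add_unit[OF dd(2), of u2] abs_add_unit[OF dd(3), of u3]
      by (simp add: P_def)
    moreover have "(d1,d2,d3) \<in> set unit_offsets" unfolding set_unit_offsets using dd by blast
    ultimately show "b \<in> shift ` set (filter P unit_offsets)"
      by (force simp: be shift_def)
  qed
  then have "card {b \<in> octV n. octAdj n b u} \<le> card (shift ` set (filter P unit_offsets))"
    by (intro card_mono) auto
  also have "\<dots> \<le> length (filter P unit_offsets)"
    using card_image_le card_length order_trans by blast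
  finally show ?thesis using count by linarith
qed

lemma inverse_sq_dist_sum_pos:
  assumes v: "v \<in> octV n" and n: "1 \<le> n"
  shows "0 < (\<Sum>w\<in>octV n - {v}. 1 / (real (octDist n v w))\<^sup>2)"
proof -
  obtain v1 v2 v3 where ve: "v = (v1,v2,v3)" by (cases v) auto
  have mv: "(-v1,-v2,-v3) \<in> octV n - {v}" using v n ve by (auto simp: octV_def)
  have "0 < 1 / (real (octDist n v (-v1,-v2,-v3)))\<^sup>2"
    using octDist_pos[of v n "(-v1,-v2,-v3)"] v mv by auto
  also have "\<dots> \<le> (\<Sum>w\<in>octV n - {v}. 1 / (real (octDist n v w))\<^sup>2)"
    by (rule member_le_sum[OF mv]) (auto intro: finite_octV)
  finally show ?thesis .
qed

lemma octZ_nonneg: "0 \<le> octZ n v"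
  by (simp add: octZ_def sum_nonneg)

lemma pmf_choice_pmf:
  assumes v: "v \<in> octV n" and n: "1 \<le> n"
  shows "pmf (choice_pmf n v) w = (if w \<in> octV n - {v} then octZ n v / (real (octDist n v w))\<^sup>2 else 0)"
  unfolding choice_pmf_def
proof (rule pmf_embed_pmf)
  fix x show "0 \<le> (if x \<in> octV n - {v} then octZ n v / (real (octDist n v x))\<^sup>2 else 0)"
    by (simp add: octZ_nonneg)
next
  let ?S = "\<Sum>w\<in>octV n - {v}. 1 / (real (octDist n v w))\<^sup>2"
  have pos: "0 < ?S" by (rule inverse_sq_dist_sum_pos[OF v n])
  have "(\<integral>\<^sup>+x. ennreal (if x \<in> octV n - {v} then octZ n v / (real (octDist n v x))\<^sup>2 else 0) \<partial>count_space UNIV)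
     = (\<Sum>x\<in>octV n - {v}. ennreal (if x \<in> octV n - {v} then octZ n v / (real (octDist n v x))\<^sup>2 else 0))"
    by (rule nn_integral_count_space') (auto intro: finite_octV)
  also have "\<dots> = ennreal (\<Sum>x\<in>octV n - {v}. octZ n v / (real (octDist n v x))\<^sup>2)"
    by (subst sum_ennreal) (auto simp: octZ_nonneg intro!: sum.cong)
  also have "(\<Sum>x\<in>octV n - {v}. octZ n v / (real (octDist n v x))\<^sup>2) = octZ n v * ?S"
    by (simp add: sum_distrib_left divide_inverse)
  also have "octZ n v * ?S = 1" using pos by (simp add: octZ_def)
  finally show "(\<integral>\<^sup>+x. ennreal (if x \<in> octV n - {v} then octZ n v / (real (octDist n v x))\<^sup>2 else 0) \<partial>count_space UNIV) = 1"
    by simp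
qed

lemma prob_OSW_two_choices:
  assumes u: "u \<in> octV n" and a: "a \<in> octV n" and ua: "u \<noteq> a"
  shows "measure_pmf.prob (OSW n) {c. c u = a \<and> c a = b} = pmf (choice_pmf n u) a * pmf (choice_pmf n a) b"
proof -
  define B where "B = (\<lambda>x. if x = u then {a} else if x = a then {b} else (UNIV::vtx set))"
  have "{c. c u = a \<and> c a = b} = Pi (octV n) B"
  proof (intro equalityI subsetI)
    fix c assume "c \<in> Pi (octV n) B"
    then have "c u \<in> B u" "c a \<in> B a" using u a by (auto intro: Pi_mem)
    then show "c \<in> {c. c u = a \<and> c a = b}" using ua by (simp add: B_def)
  qed (auto simp: B_def)
  then have "measure_pmf.prob (OSW n) {c. c u = a \<and> c a = b} = (\<Prod>x\<in>octV n. measure_pmf.prob (choice_pmf n x) (B x))"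
    unfolding OSW_def by (simp add: measure_Pi_pmf_Pi finite_octV)
  also have "\<dots> = (\<Prod>x\<in>{u,a}. measure_pmf.prob (choice_pmf n x) (B x))"
    using u a by (intro prod.mono_neutral_right finite_octV) (auto simp: B_def)
  also have "\<dots> = pmf (choice_pmf n u) a * pmf (choice_pmf n a) b"
    using ua by (simp add: B_def measure_pmf_single)
  finally show ?thesis .
qed

lemma octZ_le:
  assumes "21 \<le> n" "v \<in> octV n"
  shows "octZ n v \<le> 1 / ln (real n + 1)"
  using ln_le_inverse_sq_dist_sum[OF assms] assms(1)
  by (simp add: octZ_def inverse_eq_divide frac_le)

lemma pmf_choice_pair_le:
  assumes n: "21 \<le> n" and u: "u \<in> octV n" and a: "a \<in> octV n" and b: "b \<in> octV n"
    and adj: "octAdj n b u" and ua: "u \<noteq> a" and d1: "2 \<le> octDist n u a" and d2: "2 \<le> octDist n a b"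
  shows "pmf (choice_pmf n u) a * pmf (choice_pmf n a) b \<le> pair_weight (proj_dist u a) / (ln (real n + 1))\<^sup>2"
proof -
  define L where "L = ln (real n + 1)"
  define j where "j = proj_dist u a"
  define D1 where "D1 = octDist n u a"
  define D2 where "D2 = octDist n a b"
  have n1: "1 \<le> n" using n by simp
  have ab: "a \<noteq> b" using d2 octDist_self[of n a] by auto
  have p: "pmf (choice_pmf n u) a * pmf (choice_pmf n a) b = octZ n u * octZ n a / ((real D1)\<^sup>2 * (real D2)\<^sup>2)"
    using pmf_choice_pmf[OF u n1, of a] pmf_choice_pmf[OF a n1, of b] a b ua ab
    by (simp add: D1_def D2_def)
  have "octZ n u * octZ n a \<le> (1 / L) * (1 / L)"
    using octZ_le[OF n u] octZ_le[OF n a] octZ_nonneg by (intro mult_mono) (auto simp: L_def)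
  then have Z: "octZ n u * octZ n a \<le> 1 / L\<^sup>2" by (simp add: power2_eq_square)
  have "\<bar>fst u - fst a\<bar> \<le> int D1" "\<bar>fst (snd u) - fst (snd a)\<bar> \<le> int D1"
       "\<bar>fst a - fst b\<bar> \<le> int D2" "\<bar>fst (snd a) - fst (snd b)\<bar> \<le> int D2"
       "\<bar>fst b - fst u\<bar> \<le> 1" "\<bar>fst (snd b) - fst (snd u)\<bar> \<le> 1"
    using octDist_coord_le[OF u a] octDist_coord_le[OF a b] adj
    by (auto simp: D1_def D2_def octAdj_def)
  then have "j \<le> D1" "j \<le> D2 + 1" unfolding j_def proj_dist_def by linarith+
  then have "max 2 j \<le> D1" "max 2 (j - 1) \<le> D2" using d1 d2 by (auto simp: D1_def D2_def)
  then have w: "1 / ((real D1)\<^sup>2 * (real D2)\<^sup>2) \<le> pair_weight j"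
    unfolding pair_weight_def by (intro divide_left_mono mult_mono power_mono mult_pos_pos) auto
  have "octZ n u * octZ n a / ((real D1)\<^sup>2 * (real D2)\<^sup>2) \<le> 1 / L\<^sup>2 * pair_weight j"
    using mult_mono[OF Z w] octZ_nonneg by simp
  then show ?thesis using p by (simp add: L_def j_def)
qed

lemma prob_E6_le:
  assumes n: "21 \<le> n" and u: "u \<in> octV n"
  shows "measure_pmf.prob (OSW n) (E6 n u) \<le> 6 * (2 * (221/80)) / (ln (real n + 1))\<^sup>2"
proof -
  define L where "L = ln (real n + 1)"
  define N where "N = {b \<in> octV n. octAdj n b u}"
  define Pairs where "Pairs = {(a,b) \<in> octV n \<times> N. u \<noteq> a \<and> 2 \<le> octDist n u a \<and> 2 \<le> octDist n a b}"
  have finN: "finite N" using finite_octV by (simp add: N_def)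
  have finP: "finite Pairs" unfolding Pairs_def using finite_octV finN by (auto intro: finite_subset)
  have "E6 n u \<subseteq> (\<Union>(a,b)\<in>Pairs. {c. c u = a \<and> c a = b})"
  proof
    fix c assume "c \<in> E6 n u"
    then obtain a b where "a \<in> octV n" "b \<in> octV n" "u \<noteq> a"
      "type_w n c u a" "type_w n c a b" "type_s n b u" unfolding E6_def by blast
    then have "(a,b) \<in> Pairs" "c u = a \<and> c a = b"
      by (auto simp: Pairs_def N_def type_w_def type_s_def)
    then show "c \<in> (\<Union>(a,b)\<in>Pairs. {c. c u = a \<and> c a = b})" by blast
  qed
  then have "measure_pmf.prob (OSW n) (E6 n u) \<le> measure_pmf.prob (OSW n) (\<Union>(a,b)\<in>Pairs. {c. c u = a \<and> c a = b})"
    by (rule measure_pmf.finite_measure_mono) simp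
  also have "\<dots> \<le> (\<Sum>(a,b)\<in>Pairs. measure_pmf.prob (OSW n) {c. c u = a \<and> c a = b})"
    using measure_pmf.finite_measure_subadditive_finite[OF finP, of "\<lambda>(a,b). {c. c u = a \<and> c a = b}"]
    by (simp add: split_def)
  also have "\<dots> \<le> (\<Sum>(a,b)\<in>Pairs. pair_weight (proj_dist u a) / L\<^sup>2)"
    by (intro sum_mono)
      (auto simp: Pairs_def N_def L_def prob_OSW_two_choices[OF u] intro!: pmf_choice_pair_le[OF n u])
  also have "\<dots> \<le> (\<Sum>(a,b)\<in>octV n \<times> N. pair_weight (proj_dist u a) / L\<^sup>2)"
    by (intro sum_mono2 finite_cartesian_product finite_octV finN)
       (auto simp: Pairs_def pair_weight_def)
  also have "\<dots> = real (card N) * (\<Sum>a\<in>octV n. pair_weight (proj_dist u a)) / L\<^sup>2"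
    by (simp add: sum.cartesian_product[symmetric] sum_divide_distrib[symmetric] sum_distrib_left)
  also have "\<dots> \<le> 6 * (2 * (221/80)) / L\<^sup>2"
    using card_octAdj_le_6[OF u] pair_weight_sum_le[OF u] n
    by (intro divide_right_mono mult_mono) (auto simp: N_def pair_weight_def intro: sum_nonneg)
  finally show ?thesis by (simp add: L_def)
qed

lemma zeta3_ge_1: "1 \<le> zeta3"
proof -
  have "summable (\<lambda>i. 1 / (real (Suc i))^3)"
    using inverse_power_summable[of 3, where 'a=real] summable_Suc_iff[of "\<lambda>n. inverse (real n ^ 3)"]
    by (simp add: divide_inverse del: of_nat_Suc)
  then have "(\<Sum>i\<in>{0}. 1 / (real (Suc i))^3) \<le> zeta3"
    unfolding zeta3_def by (rule sum_le_suminf) auto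
  thus ?thesis by simp
qed

theorem lemma10:
  fixes n :: nat and u :: vtx
  assumes "n \<ge> 1" and "u \<in> octV n"
  shows "measure_pmf.prob (OSW n) (E6 n u) < 36 * zeta3 / (ln (real n + 1))\<^sup>2"
proof -
  define L where "L = ln (real n + 1)"
  have L: "0 < L" using assms(1) by (simp add: L_def)
  have "measure_pmf.prob (OSW n) (E6 n u) < 36 / L\<^sup>2"
  proof (cases "L < 6")
    case True
    then have "1 < 36 / L\<^sup>2" using L by (simp add: field_simps power_strict_mono[of L 6 2, simplified])
    then show ?thesis using measure_pmf.prob_le_1[of "OSW n" "E6 n u"] by linarith
  next
    case False
    have "(3::real) \<le> exp 2" using exp_ge_add_one_self[of "2::real"] by simp
    then have "(3::real) * 3 * 3 \<le> exp 2 * exp 2 * exp 2" by (intro mult_mono) auto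
    also have "\<dots> = exp 6" by (simp add: exp_add[symmetric])
    also have "\<dots> \<le> exp L" using False by simp
    also have "\<dots> = real n + 1" by (simp add: L_def)
    finally have "21 \<le> n" by simp
    then have "measure_pmf.prob (OSW n) (E6 n u) \<le> 6 * (2 * (221/80)) / L\<^sup>2"
      using prob_E6_le[OF _ assms(2)] by (simp add: L_def)
    also have "\<dots> < 36 / L\<^sup>2" using L by (simp add: field_simps)
    finally show ?thesis .
  qed
  also have "\<dots> \<le> 36 * zeta3 / L\<^sup>2" using zeta3_ge_1 L by (simp add: divide_right_mono)
  finally show ?thesis by (simp add: L_def)
qed

end
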